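(* For all integers $m\ge 2$, $n\ge 2$, the state complexity of $L(M)^R\cup L(N)$, where $M$ ranges over complete DFAs with $m$ states and $N$ over complete DFAs with $n$ states (over a common alphabet), is exactly $2^m\cdot n-n+1$: for every such $M,N$ some DFA with at most $2^m\cdot n-n+1$ states accepts $L(M)^R\cup L(N)$, and there exist such $M,N$ for which the minimal complete DFA of $L(M)^R\cup L(N)$ has exactly $2^m\cdot n-n+1$ states.
   Context: DFAs are complete deterministic finite automata; $L(M)$ is the accepted language; $L^R=\{w^R: w\in L\}$ is the reversal of $L$. The state complexity of a regular language is the number of states of its minimal complete DFA; the state complexity of an operation is the maximum state complexity of its result over all argument DFAs of the given sizes. *)

theory Defs
  imports Main
begin

record ('q, 'a) dfa =
  states :: "'q set"
  alphabet :: "'a set"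
  init :: 'q
  trans :: "'q \<Rightarrow> 'a \<Rightarrow> 'q"
  final :: "'q set"

definition wf_dfa :: "('q, 'a) dfa \<Rightarrow> bool" where
  "wf_dfa M \<longleftrightarrow> finite (states M) \<and> finite (alphabet M) \<and>
     init M \<in> states M \<and> final M \<subseteq> states M \<and>
     (\<forall>q\<in>states M. \<forall>a\<in>alphabet M. trans M q a \<in> states M)"

definition delta_hat :: "('q, 'a) dfa \<Rightarrow> 'q \<Rightarrow> 'a list \<Rightarrow> 'q" where
  "delta_hat M q w = foldl (trans M) q w"

definition lang :: "('q, 'a) dfa \<Rightarrow> 'a list set" where
  "lang M = {w. set w \<subseteq> alphabet M \<and> delta_hat M (init M) w \<in> final M}"

definition rev_lang :: "'a list set \<Rightarrow> 'a list set" where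
  "rev_lang L = rev ` L"

text \<open>State complexity of L over alphabet Alph: number of states of a minimal
complete DFA over Alph accepting L (states taken w.l.o.g. as naturals).\<close>
definition sc :: "'a set \<Rightarrow> 'a list set \<Rightarrow> nat" where
  "sc Alph L = (LEAST k. \<exists>D :: (nat, 'a) dfa. wf_dfa D \<and> alphabet D = Alph \<and>
                     card (states D) = k \<and> lang D = L)"

end

theory Submission
  imports Defs
begin

(* Upper bound: the reversal of L(M) is recognised by the determinised reverse of M,
   whose state after reading w is the set S_w of states of M from which rev w leads to
   acceptance.  Running it in parallel with N gives a DFA for L(M)^R \<union> L(N); all pairs
   (Q_M, q) accept every continuation and can be merged into one sink, so at most
   (2^m - 1) * n + 1 = 2^m * n - n + 1 states are needed.
   Lower bound: a witness pair over the alphabet {0..<2^m+2+m}.  In M, letter b < 2^m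
   sends state x to 0 iff bit x of b is set, letter 2^m+2+p resets to state p; in N,
   letter 2^m counts up to n-1 and 2^m+1 resets to 0.  The words (2^m)^q b with
   b < 2^m - 1, q < n, together with the single word 2^m - 1, are 2^m * n - n + 1
   pairwise distinguishable words, so by the fooling-set argument every DFA for the
   union has at least that many states. *)

section \<open>Runs of a DFA\<close>

lemma delta_hat_Nil [simp]: "delta_hat M q [] = q"
  by (simp add: delta_hat_def)

lemma delta_hat_Cons [simp]: "delta_hat M q (a # w) = delta_hat M (trans M q a) w"
  by (simp add: delta_hat_def)

lemma delta_hat_append [simp]: "delta_hat M q (u @ v) = delta_hat M (delta_hat M q u) v"
  by (simp add: delta_hat_def)

lemma delta_hat_in_states:
  "wf_dfa M \<Longrightarrow> q \<in> states M \<Longrightarrow> set w \<subseteq> alphabet M \<Longrightarrow> delta_hat M q w \<in> states M"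
  by (induction w arbitrary: q) (auto simp: wf_dfa_def)

lemma rev_lang_iff: "w \<in> rev_lang L \<longleftrightarrow> rev w \<in> L"
  unfolding rev_lang_def by (metis image_iff rev_rev_ident)

text \<open>Any DFA can be renamed into one with natural-number states; this is needed
  because sc and the theorem quantify over DFAs with states of type nat.\<close>
lemma nat_renaming:
  assumes wf: "wf_dfa (D0 :: ('s, 'a) dfa)"
  shows "\<exists>D :: (nat, 'a) dfa. wf_dfa D \<and> alphabet D = alphabet D0 \<and>
           card (states D) = card (states D0) \<and> lang D = lang D0"
proof -
  let ?S = "states D0"
  have "finite ?S" using wf by (simp add: wf_dfa_def)
  then obtain f where "bij_betw f ?S {0..<card ?S}" using ex_bij_betw_finite_nat by blast
  then have inj: "inj_on f ?S" by (simp add: bij_betw_def)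
  define g where "g = inv_into ?S f"
  have gf: "g (f q) = q" if "q \<in> ?S" for q using inj that by (simp add: g_def)
  define D where "D = \<lparr>states = f ` ?S, alphabet = alphabet D0, init = f (init D0),
     trans = (\<lambda>k a. f (trans D0 (g k) a)), final = f ` final D0\<rparr>"
  have run: "delta_hat D (f q) w = f (delta_hat D0 q w)"
    if "q \<in> ?S" "set w \<subseteq> alphabet D0" for q w
    using that
  proof (induction w arbitrary: q)
    case (Cons a w)
    then have "trans D0 q a \<in> ?S" using wf by (auto simp: wf_dfa_def)
    then show ?case using Cons by (simp add: D_def gf)
  qed simp
  have "lang D = lang D0"
  proof (rule set_eqI)
    fix w
    have i: "init D0 \<in> ?S" and fs: "final D0 \<subseteq> ?S" using wf by (auto simp: wf_dfa_def)
    show "w \<in> lang D \<longleftrightarrow> w \<in> lang D0"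
    proof (cases "set w \<subseteq> alphabet D0")
      case True
      have "delta_hat D0 (init D0) w \<in> ?S" using delta_hat_in_states[OF wf i True] .
      then show ?thesis
        using run[OF i True] inj_on_image_mem_iff[OF inj _ fs] True
        by (simp add: lang_def D_def)
    qed (simp add: lang_def D_def)
  qed
  moreover have "wf_dfa D" using wf unfolding D_def wf_dfa_def by (auto simp: gf)
  moreover have "card (states D) = card ?S" using inj by (simp add: D_def card_image)
  ultimately show ?thesis by (auto simp: D_def)
qed

section \<open>Distinguishable words and the fooling-set bound\<close>

definition distinguishable :: "'a set \<Rightarrow> 'a list set \<Rightarrow> 'a list \<Rightarrow> 'a list \<Rightarrow> bool" where
  "distinguishable A L u u' \<longleftrightarrow> (\<exists>v. set v \<subseteq> A \<and> (u @ v \<in> L) \<noteq> (u' @ v \<in> L))"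

lemma distinguishable_sym: "distinguishable A L u u' \<Longrightarrow> distinguishable A L u' u"
  by (auto simp: distinguishable_def)

text \<open>Fooling-set argument: distinguishable words must reach different states, so a
  DFA for L has at least as many states as there are pairwise distinguishable words.\<close>
lemma fooling_set_bound:
  assumes wf: "wf_dfa D"
    and words: "\<And>i. i \<in> I \<Longrightarrow> set (W i) \<subseteq> alphabet D"
    and dist: "\<And>i j. i \<in> I \<Longrightarrow> j \<in> I \<Longrightarrow> i \<noteq> j \<Longrightarrow>
                 distinguishable (alphabet D) (lang D) (W i) (W j)"
  shows "card I \<le> card (states D)"
proof -
  let ?f = "\<lambda>i. delta_hat D (init D) (W i)"
  have "inj_on ?f I"
  proof (rule inj_onI, rule ccontr)
    fix i j assume "i \<in> I" "j \<in> I" "?f i = ?f j" "i \<noteq> j"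
    then show False
      using dist[of i j] words[of i] words[of j] by (auto simp: distinguishable_def lang_def)
  qed
  moreover have "?f ` I \<subseteq> states D"
    using delta_hat_in_states[OF wf] words wf by (auto simp: wf_dfa_def)
  moreover have "finite (states D)" using wf by (simp add: wf_dfa_def)
  ultimately show ?thesis by (meson card_inj_on_le)
qed

lemma sc_eqI:
  assumes "wf_dfa (D :: (nat, 'a) dfa)" "alphabet D = A" "card (states D) = k" "lang D = L"
    and "\<And>D' :: (nat, 'a) dfa. wf_dfa D' \<Longrightarrow> alphabet D' = A \<Longrightarrow> lang D' = L \<Longrightarrow>
           k \<le> card (states D')"
  shows "sc A L = k"
  unfolding sc_def using assms by (intro Least_equality) blast+

section \<open>Upper bound: reversed subset construction in parallel with N\<close>

text \<open>Transition of the determinised reverse of M: the set of predecessors of S under a.\<close>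
definition pre_step :: "('q, 'a) dfa \<Rightarrow> 'q set \<Rightarrow> 'a \<Rightarrow> 'q set" where
  "pre_step M S a = {p \<in> states M. trans M p a \<in> S}"

text \<open>The states of M from which rev w is accepted; w is in L(M)^R iff init M belongs to it.\<close>
definition rev_accepting :: "('q, 'a) dfa \<Rightarrow> 'a list \<Rightarrow> 'q set" where
  "rev_accepting M w = {p \<in> states M. delta_hat M p (rev w) \<in> final M}"

text \<open>States of the construction: a proper subset of Q_M paired with a state of N, or a
  single accepting sink None standing for all pairs whose first component is Q_M.\<close>
definition union_states :: "('q, 'a) dfa \<Rightarrow> ('p, 'a) dfa \<Rightarrow> ('q set \<times> 'p) option set" where
  "union_states M N = Some ` ((Pow (states M) - {states M}) \<times> states N) \<union> {None}"

definition union_dfa :: "('q, 'a) dfa \<Rightarrow> ('p, 'a) dfa \<Rightarrow> (('q set \<times> 'p) option, 'a) dfa" where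
  "union_dfa M N = \<lparr> states = union_states M N,
     alphabet = alphabet M,
     init = (if final M = states M then None else Some (final M, init N)),
     trans = (\<lambda>x a. case x of None \<Rightarrow> None | Some (S, q) \<Rightarrow>
        (if pre_step M S a = states M then None else Some (pre_step M S a, trans N q a))),
     final = {x \<in> union_states M N. case x of None \<Rightarrow> True
                                          | Some (S, q) \<Rightarrow> init M \<in> S \<or> q \<in> final N} \<rparr>"

lemma union_dfa_alphabet: "alphabet (union_dfa M N) = alphabet M"
  by (simp add: union_dfa_def)

lemma union_dfa_run:
  assumes M: "wf_dfa M" and w: "set w \<subseteq> alphabet M"
  shows "delta_hat (union_dfa M N) (init (union_dfa M N)) w =
     (if rev_accepting M w = states M then None
      else Some (rev_accepting M w, delta_hat N (init N) w))"
  using w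
proof (induction w rule: rev_induct)
  case Nil
  have "rev_accepting M [] = final M" using M by (auto simp: rev_accepting_def wf_dfa_def)
  then show ?case by (simp add: union_dfa_def)
next
  case (snoc a w)
  then have a: "a \<in> alphabet M" by simp
  have step: "rev_accepting M (w @ [a]) = pre_step M (rev_accepting M w) a"
    using M a by (auto simp: rev_accepting_def pre_step_def wf_dfa_def)
  have sink: "pre_step M (states M) a = states M"
    using M a by (auto simp: pre_step_def wf_dfa_def)
  show ?case using snoc step sink by (simp add: union_dfa_def)
qed

lemma union_dfa_lang:
  assumes M: "wf_dfa M" and N: "wf_dfa N" and A: "alphabet N = alphabet M"
  shows "lang (union_dfa M N) = rev_lang (lang M) \<union> lang N"
proof (rule set_eqI)
  fix w
  show "w \<in> lang (union_dfa M N) \<longleftrightarrow> w \<in> rev_lang (lang M) \<union> lang N"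
  proof (cases "set w \<subseteq> alphabet M")
    case True
    let ?S = "rev_accepting M w" and ?q = "delta_hat N (init N) w"
    have iM: "init M \<in> states M" using M by (simp add: wf_dfa_def)
    have "?q \<in> states N" using delta_hat_in_states[OF N] N True A by (simp add: wf_dfa_def)
    moreover have "?S \<subseteq> states M" by (auto simp: rev_accepting_def)
    ultimately have "(if ?S = states M then None else Some (?S, ?q)) \<in> final (union_dfa M N)
                     \<longleftrightarrow> init M \<in> ?S \<or> ?q \<in> final N"
      using iM by (auto simp: union_dfa_def union_states_def)
    then have "w \<in> lang (union_dfa M N) \<longleftrightarrow> init M \<in> ?S \<or> ?q \<in> final N"
      using True by (simp add: lang_def union_dfa_alphabet union_dfa_run[OF M True])
    then show ?thesis using True iM A by (simp add: rev_accepting_def rev_lang_iff lang_def)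
  next
    case False
    then show ?thesis using A by (auto simp: lang_def union_dfa_alphabet rev_lang_iff)
  qed
qed

lemma union_dfa_wf:
  assumes M: "wf_dfa M" and N: "wf_dfa N" and A: "alphabet N = alphabet M"
  shows "wf_dfa (union_dfa M N)"
  using M N A by (auto simp: wf_dfa_def union_dfa_def union_states_def pre_step_def)

text \<open>Size: (2^m - 1) * n pairs with a proper subset, plus the sink.\<close>
lemma union_dfa_card:
  assumes M: "wf_dfa M" and N: "wf_dfa N"
  shows "card (states (union_dfa M N)) =
         2 ^ card (states M) * card (states N) - card (states N) + 1"
proof -
  have fM: "finite (states M)" and fN: "finite (states N)" using M N by (auto simp: wf_dfa_def)
  have "card (Pow (states M) - {states M}) = 2 ^ card (states M) - 1"
    using fM by (simp add: card_Pow)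
  then have "card (union_states M N) = (2 ^ card (states M) - 1) * card (states N) + 1"
    using fM fN by (simp add: union_states_def card_image card_cartesian_product)
  then show ?thesis by (simp add: union_dfa_def diff_mult_distrib)
qed

lemma rev_union_upper_bound:
  assumes M: "wf_dfa (M :: ('q, 'a) dfa)" and N: "wf_dfa (N :: ('p, 'a) dfa)"
    and A: "alphabet M = alphabet N"
  shows "\<exists>D :: (nat, 'a) dfa. wf_dfa D \<and> alphabet D = alphabet M \<and>
           card (states D) = 2 ^ card (states M) * card (states N) - card (states N) + 1 \<and>
           lang D = rev_lang (lang M) \<union> lang N"
  using nat_renaming[OF union_dfa_wf[OF M N A[symmetric]]] union_dfa_card[OF M N]
    union_dfa_lang[OF M N A[symmetric]]
  by (auto simp: union_dfa_alphabet)

section \<open>Lower bound: the witness automata\<close>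

definition wM :: "nat \<Rightarrow> (nat, nat) dfa" where
  "wM m = \<lparr>states = {0..<m}, alphabet = {0..<2^m+2+m}, init = 0,
     trans = (\<lambda>x a. if a < 2^m then (if bit a x then 0 else 1)
                    else if a < 2^m + 2 then x else a - (2^m+2)),
     final = {0}\<rparr>"

definition wN :: "nat \<Rightarrow> nat \<Rightarrow> (nat, nat) dfa" where
  "wN m n = \<lparr>states = {0..<n}, alphabet = {0..<2^m+2+m}, init = 0,
     trans = (\<lambda>q a. if a = 2^m then min (q+1) (n-1) else if a = 2^m+1 then 0 else q),
     final = {n-1}\<rparr>"

lemma wM_wf: "m \<ge> 2 \<Longrightarrow> wf_dfa (wM m)"
  by (auto simp: wf_dfa_def wM_def)

lemma wN_wf: "n > 0 \<Longrightarrow> wf_dfa (wN m n)"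
  by (auto simp: wf_dfa_def wN_def)

lemma wM_counter_letters: "delta_hat (wM m) x (replicate k (2^m)) = x"
  by (induction k) (auto simp: wM_def)

lemma wN_counter_letters:
  "x \<le> n - 1 \<Longrightarrow> delta_hat (wN m n) x (replicate k (2^m)) = min (x + k) (n - 1)"
proof (induction k arbitrary: x)
  case (Suc k)
  have "trans (wN m n) x (2^m) = min (x+1) (n-1)" by (simp add: wN_def)
  moreover have "min (min (x+1) (n-1) + k) (n-1) = min (x + Suc k) (n-1)" by (simp add: min_def)
  ultimately show ?case using Suc.IH[of "min (x+1) (n-1)"] by simp
qed simp

definition witness_lang :: "nat \<Rightarrow> nat \<Rightarrow> nat list set" where
  "witness_lang m n = rev_lang (lang (wM m)) \<union> lang (wN m n)"

text \<open>The fooling words (2^m)^q b: N counts to q, and the reversed word feeds b to M last.\<close>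
definition fool_word :: "nat \<Rightarrow> nat \<times> nat \<Rightarrow> nat list" where
  "fool_word m bq = replicate (snd bq) (2^m) @ [fst bq]"

lemma fool_word_append_iff:
  assumes b: "b < 2^m" and q: "q < n" and v: "set v \<subseteq> {0..<2^m+2+m}"
  shows "fool_word m (b, q) @ v \<in> witness_lang m n \<longleftrightarrow>
     bit b (delta_hat (wM m) 0 (rev v)) \<or> delta_hat (wN m n) q v = n - 1"
proof -
  have letters: "set (fool_word m (b, q) @ v) \<subseteq> {0..<2^m+2+m}"
    using b v by (auto simp: fool_word_def)
  have "delta_hat (wM m) 0 (rev (fool_word m (b, q) @ v)) =
        (if bit b (delta_hat (wM m) 0 (rev v)) then 0 else 1)"
    using b by (simp add: fool_word_def wM_counter_letters) (simp add: wM_def)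
  moreover have "delta_hat (wN m n) 0 (fool_word m (b, q) @ v) = delta_hat (wN m n) q v"
    using wN_counter_letters[of 0 n m q] q b by (simp add: fool_word_def) (simp add: wN_def)
  ultimately show ?thesis using letters
    by (simp add: witness_lang_def rev_lang_iff lang_def wM_def wN_def)
qed

lemma bit_difference_below:
  fixes b b' :: nat
  assumes "b < 2^m" "b' < 2^m" "b \<noteq> b'"
  shows "\<exists>p<m. bit b p \<noteq> bit b' p"
proof -
  obtain p where p: "bit b p \<noteq> bit b' p" using assms(3) bit_eq_iff by blast
  have "bit c p \<longleftrightarrow> p < m \<and> bit c p" if "c < 2^m" for c :: nat
    using bit_take_bit_iff[of m c p] take_bit_nat_eq_self[OF that] by simp
  then show ?thesis using p assms by metis
qed

lemma unset_bit_below: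
  fixes b :: nat
  assumes "b < 2^m - 1"
  shows "\<exists>p<m. \<not> bit b p"
proof -
  obtain p where p: "p < m" "bit b p \<noteq> bit (2^m - 1 :: nat) p"
    using bit_difference_below[of b m "2^m - 1"] assms by force
  have "bit (mask m :: nat) p" using p(1) by (simp add: bit_mask_iff)
  then have "bit (2^m - 1 :: nat) p" by (simp add: mask_eq_exp_minus_1)
  then show ?thesis using p by blast
qed

text \<open>Words with different subset letters b, b' are separated by the continuation
  (2^m+1)(2^m+2+p), where p is a bit position on which b and b' differ: it resets N to
  0 and makes M test bit p.\<close>
lemma distinguish_by_bit:
  assumes n: "n \<ge> 2" and b: "b < 2^m" "b' < 2^m" and q: "q < n" "q' < n"
    and p: "p < m" "bit b p \<noteq> bit b' p"
  shows "distinguishable {0..<2^m+2+m} (witness_lang m n) (fool_word m (b, q)) (fool_word m (b', q'))"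
proof -
  let ?v = "[2^m+1, 2^m+2+p]"
  have v: "set ?v \<subseteq> {0..<2^m+2+m}" using p by auto
  have "delta_hat (wM m) 0 (rev ?v) = p" "\<And>x. delta_hat (wN m n) x ?v = 0"
    by (simp_all add: wM_def wN_def)
  then show ?thesis
    using fool_word_append_iff[OF b(1) q(1) v] fool_word_append_iff[OF b(2) q(2) v] n p v
    unfolding distinguishable_def by (intro exI[of _ ?v]) auto
qed

text \<open>Words with the same b but counters q < q' are separated by (2^m)^(n-1-q')(2^m+2+p)
  for an unset bit p of b: only the second counter reaches n-1, and M rejects.\<close>
lemma distinguish_by_counter:
  assumes b: "b < 2^m" and qq: "q < q'" "q' < n" and p: "p < m" "\<not> bit b p"
  shows "distinguishable {0..<2^m+2+m} (witness_lang m n) (fool_word m (b, q)) (fool_word m (b, q'))"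
proof -
  let ?k = "n - 1 - q'"
  let ?v = "replicate ?k (2^m) @ [2^m+2+p]"
  have v: "set ?v \<subseteq> {0..<2^m+2+m}" using p by auto
  have "delta_hat (wM m) 0 (rev ?v) = p" by (simp add: wM_counter_letters) (simp add: wM_def)
  moreover have "delta_hat (wN m n) x ?v = min (x + ?k) (n-1)" if "x < n" for x
    using wN_counter_letters[of x n m ?k] that by (simp add: wN_def)
  ultimately show ?thesis
    using fool_word_append_iff[OF b _ v, of q] fool_word_append_iff[OF b qq(2) v] qq p v
    unfolding distinguishable_def by (intro exI[of _ ?v]) auto
qed

definition fool_index :: "nat \<Rightarrow> nat \<Rightarrow> (nat \<times> nat) set" where
  "fool_index m n = insert (2^m - 1, 0) ({0..<2^m - 1} \<times> {0..<n})"

lemma fool_index_bounds: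
  assumes "(b, q) \<in> fool_index m n" "n > 0"
  shows "b < 2^m" "q < n"
proof -
  have "(0::nat) < 2^m" by simp
  then show "b < 2^m" "q < n" using assms unfolding fool_index_def by auto
qed

lemma fool_index_card: "card (fool_index m n) = 2^m * n - n + 1"
  by (simp add: fool_index_def card_cartesian_product diff_mult_distrib)

lemma fool_words_distinguishable:
  assumes n: "n \<ge> 2" and i: "i \<in> fool_index m n" and j: "j \<in> fool_index m n" and "i \<noteq> j"
  shows "distinguishable {0..<2^m+2+m} (witness_lang m n) (fool_word m i) (fool_word m j)"
proof -
  obtain b q b' q' where ij: "i = (b, q)" "j = (b', q')" by fastforce
  have bq: "b < 2^m" "q < n" "b' < 2^m" "q' < n"
    using fool_index_bounds i j ij n by auto
  show ?thesis
  proof (cases "b = b'")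
    case False
    then show ?thesis
      using bit_difference_below[OF bq(1,3)] distinguish_by_bit[OF n bq(1,3) bq(2,4)] ij by blast
  next
    case True
    then have "q \<noteq> q'" "b < 2^m - 1" using i j ij \<open>i \<noteq> j\<close> by (auto simp: fool_index_def)
    then obtain p where "p < m" "\<not> bit b p" using unset_bit_below by blast
    then show ?thesis
      using distinguish_by_counter[OF bq(1)] distinguishable_sym \<open>q \<noteq> q'\<close> bq ij True
      by (metis linorder_neqE_nat)
  qed
qed

lemma witness_lower_bound:
  assumes n: "n \<ge> 2" and wf: "wf_dfa (D :: (nat, nat) dfa)"
    and A: "alphabet D = {0..<2^m+2+m}" and L: "lang D = witness_lang m n"
  shows "2^m * n - n + 1 \<le> card (states D)"
proof -
  have "card (fool_index m n) \<le> card (states D)"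
  proof (rule fooling_set_bound[OF wf])
    show "set (fool_word m i) \<subseteq> alphabet D" if "i \<in> fool_index m n" for i
    proof -
      obtain b q where i: "i = (b, q)" by fastforce
      then have "b < 2^m" using fool_index_bounds(1) that n by simp
      then show ?thesis unfolding i A fool_word_def by auto
    qed
    show "distinguishable (alphabet D) (lang D) (fool_word m i) (fool_word m j)"
      if "i \<in> fool_index m n" "j \<in> fool_index m n" "i \<noteq> j" for i j
      unfolding A L by (rule fool_words_distinguishable[OF n that])
  qed
  then show ?thesis by (simp only: fool_index_card)
qed

theorem theorem9:
  fixes m n :: nat
  assumes "m \<ge> 2" and "n \<ge> 2"
  shows "(\<forall>(M :: ('q, 'a) dfa) (N :: ('p, 'a) dfa).
            wf_dfa M \<and> wf_dfa N \<and> alphabet M = alphabet N \<and>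
            card (states M) = m \<and> card (states N) = n \<longrightarrow>
            (\<exists>D :: (nat, 'a) dfa. wf_dfa D \<and> alphabet D = alphabet M \<and>
               card (states D) \<le> 2 ^ m * n - n + 1 \<and>
               lang D = rev_lang (lang M) \<union> lang N))
       \<and> (\<exists>(M :: (nat, nat) dfa) (N :: (nat, nat) dfa).
            wf_dfa M \<and> wf_dfa N \<and> alphabet M = alphabet N \<and>
            card (states M) = m \<and> card (states N) = n \<and>
            sc (alphabet M) (rev_lang (lang M) \<union> lang N) = 2 ^ m * n - n + 1)"
proof (intro conjI allI impI)
  fix M :: "('q, 'a) dfa" and N :: "('p, 'a) dfa"
  assume "wf_dfa M \<and> wf_dfa N \<and> alphabet M = alphabet N \<and>
          card (states M) = m \<and> card (states N) = n"
  then show "\<exists>D :: (nat, 'a) dfa. wf_dfa D \<and> alphabet D = alphabet M \<and>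
               card (states D) \<le> 2 ^ m * n - n + 1 \<and> lang D = rev_lang (lang M) \<union> lang N"
    using rev_union_upper_bound[of M N] by fastforce
next
  have wf: "wf_dfa (wM m)" "wf_dfa (wN m n)" using assms by (simp_all add: wM_wf wN_wf)
  have shape: "alphabet (wM m) = {0..<2^m+2+m}" "alphabet (wN m n) = {0..<2^m+2+m}"
    "card (states (wM m)) = m" "card (states (wN m n)) = n"
    by (simp_all add: wM_def wN_def)
  obtain D :: "(nat, nat) dfa" where "wf_dfa D" "alphabet D = alphabet (wM m)"
      "card (states D) = 2 ^ m * n - n + 1" "lang D = witness_lang m n"
    using rev_union_upper_bound[OF wf] shape by (auto simp: witness_lang_def)
  then have "sc (alphabet (wM m)) (witness_lang m n) = 2 ^ m * n - n + 1"
    using witness_lower_bound[OF assms(2)] shape by (intro sc_eqI) auto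
  then show "\<exists>(M :: (nat, nat) dfa) (N :: (nat, nat) dfa).
            wf_dfa M \<and> wf_dfa N \<and> alphabet M = alphabet N \<and>
            card (states M) = m \<and> card (states N) = n \<and>
            sc (alphabet M) (rev_lang (lang M) \<union> lang N) = 2 ^ m * n - n + 1"
    using wf shape unfolding witness_lang_def by (intro exI[of _ "wM m"] exI[of _ "wN m n"]) simp
qed

end
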